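(* Let $C$ be a clause and $\Gamma$ a set of clauses with designated blocking variables. Suppose there is a permutation $\pi$ of the variables (viewed as a substitution) such that (1) $\pi$ maps the set of blocking variables to itself, (2) the substitution $\lnot C\circ\pi$ satisfies $C$, and (3) $\Gamma{\upharpoonright}_{\lnot C}\supseteq\Gamma{\upharpoonright}_{\lnot C\circ\pi}$. Then $C$ is cost-SR w.r.t. $\Gamma$.
   Context: Substitutions map variables to $0$, $1$ or literals ($\sigma(\lnot x)=\lnot\sigma(x)$, $\sigma(0)=0$, $\sigma(1)=1$); $(\sigma\circ\tau)(x)=\sigma(\tau(x))$; total assignments assign all variables. $C{\upharpoonright}_\sigma$: apply $\sigma$ to the literals and simplify; $\sigma$ satisfies $C$ if the result is $1$ or tautological; $\Gamma{\upharpoonright}_\sigma$ is the multiset of $C{\upharpoonright}_\sigma\ne1$, $C\in\Gamma$. $\lnot C$ is the partial assignment falsifying all literals of $C$. $\Gamma\vdash_1 D$ means unit propagation on $\Gamma{\upharpoonright}_{\lnot D}$ derives the empty clause; $\Gamma\vdash_1\Delta$ means this for all $D\in\Delta$. $\mathrm{cost}(\alpha)=\sum_i\alpha(b_i)$ over blocking variables. $C$ is cost-SR w.r.t. $\Gamma$ if there is a substitution $\sigma$ with (1) $\Gamma{\upharpoonright}_{\lnot C}\vdash_1(\Gamma\cup\{C\}){\upharpoonright}_\sigma$ and (2) $\mathrm{cost}(\tau\circ\sigma)\le\mathrm{cost}(\tau)$ for all total $\tau\supseteq\lnot C$. *)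

theory Defs
  imports Main "HOL-Library.Multiset"
begin

datatype 'v lit = Pos 'v | Neg 'v

fun var_of :: "'v lit \<Rightarrow> 'v" where
  "var_of (Pos x) = x" | "var_of (Neg x) = x"

fun neg_lit :: "'v lit \<Rightarrow> 'v lit" where
  "neg_lit (Pos x) = Neg x" | "neg_lit (Neg x) = Pos x"

type_synonym 'v clause = "'v lit set"

datatype 'v sval = Const bool | Lit "'v lit"

type_synonym 'v subst = "'v \<Rightarrow> 'v sval"

fun neg_sval :: "'v sval \<Rightarrow> 'v sval" where
  "neg_sval (Const b) = Const (\<not> b)" | "neg_sval (Lit l) = Lit (neg_lit l)"

fun subst_lit :: "'v subst \<Rightarrow> 'v lit \<Rightarrow> 'v sval" where
  "subst_lit \<sigma> (Pos x) = \<sigma> x" | "subst_lit \<sigma> (Neg x) = neg_sval (\<sigma> x)"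

fun subst_sval :: "'v subst \<Rightarrow> 'v sval \<Rightarrow> 'v sval" where
  "subst_sval \<sigma> (Const b) = Const b" | "subst_sval \<sigma> (Lit l) = subst_lit \<sigma> l"

definition subst_comp :: "'v subst \<Rightarrow> 'v subst \<Rightarrow> 'v subst" where
  "subst_comp \<sigma> \<tau> = (\<lambda>x. subst_sval \<sigma> (\<tau> x))"

definition is_total :: "'v subst \<Rightarrow> bool" where
  "is_total \<tau> \<longleftrightarrow> (\<forall>x. \<exists>b. \<tau> x = Const b)"

definition extends :: "'v subst \<Rightarrow> 'v subst \<Rightarrow> bool" where
  "extends \<tau> \<alpha> \<longleftrightarrow> (\<forall>x b. \<alpha> x = Const b \<longrightarrow> \<tau> x = Const b)"

definition neg_clause :: "'v clause \<Rightarrow> 'v subst" where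
  "neg_clause C = (\<lambda>x. if Pos x \<in> C then Const False
                        else if Neg x \<in> C then Const True
                        else Lit (Pos x))"

text \<open>Restriction of a clause: None represents the clause simplifying to 1
  (some literal mapped to 1, or the result is tautological); otherwise the
  simplified clause (literals mapped to 0 are dropped).\<close>
definition restrict_clause :: "'v subst \<Rightarrow> 'v clause \<Rightarrow> 'v clause option" where
  "restrict_clause \<sigma> C =
     (let R = subst_lit \<sigma> ` C; L = {l. Lit l \<in> R} in
      if Const True \<in> R \<or> (\<exists>l\<in>L. neg_lit l \<in> L) then None else Some L)"

definition satisfies :: "'v subst \<Rightarrow> 'v clause \<Rightarrow> bool" where
  "satisfies \<sigma> C \<longleftrightarrow> restrict_clause \<sigma> C = None"

definition restrict_ms :: "'v subst \<Rightarrow> 'v clause multiset \<Rightarrow> 'v clause multiset" where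
  "restrict_ms \<sigma> F = image_mset (\<lambda>C. the (restrict_clause \<sigma> C)) (filter_mset (\<lambda>C. restrict_clause \<sigma> C \<noteq> None) F)"

definition unit_assign :: "'v lit \<Rightarrow> 'v subst" where
  "unit_assign l = (\<lambda>x. if x = var_of l then Const (case l of Pos _ \<Rightarrow> True | Neg _ \<Rightarrow> False)
                        else Lit (Pos x))"

inductive up_refutes :: "'v clause multiset \<Rightarrow> bool" where
  empty: "{} \<in># F \<Longrightarrow> up_refutes F"
| unit: "{l} \<in># F \<Longrightarrow> up_refutes (restrict_ms (unit_assign l) F) \<Longrightarrow> up_refutes F"

definition up_implies :: "'v clause multiset \<Rightarrow> 'v clause \<Rightarrow> bool" where
  "up_implies F D \<longleftrightarrow> up_refutes (restrict_ms (neg_clause D) F)"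

definition up_implies_all :: "'v clause multiset \<Rightarrow> 'v clause multiset \<Rightarrow> bool" where
  "up_implies_all F \<Delta> \<longleftrightarrow> (\<forall>D\<in>#\<Delta>. up_implies F D)"

definition cost :: "'v set \<Rightarrow> 'v subst \<Rightarrow> nat" where
  "cost B \<alpha> = (\<Sum>b\<in>B. (if \<alpha> b = Const True then 1 else 0))"

definition cost_SR :: "'v set \<Rightarrow> 'v clause set \<Rightarrow> 'v clause \<Rightarrow> bool" where
  "cost_SR B \<Gamma> C \<longleftrightarrow>
     (\<exists>\<sigma>. up_implies_all (restrict_ms (neg_clause C) (mset_set \<Gamma>))
                         (restrict_ms \<sigma> (mset_set (\<Gamma> \<union> {C})))
        \<and> (\<forall>\<tau>. is_total \<tau> \<and> extends \<tau> (neg_clause C) \<longrightarrow>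
               cost B (subst_comp \<tau> \<sigma>) \<le> cost B \<tau>))"

definition perm_subst :: "('v \<Rightarrow> 'v) \<Rightarrow> 'v subst" where
  "perm_subst p = (\<lambda>x. Lit (Pos (p x)))"

end

theory Submission
  imports Defs
begin

text \<open>Take \<open>\<sigma> = \<not>C \<circ> \<pi>\<close>. Since \<open>\<sigma>\<close> satisfies \<open>C\<close>, the reduct \<open>(\<Gamma> \<union> {C})|\<sigma>\<close> is
  \<open>\<Gamma>|\<sigma>\<close>, which by hypothesis is a sub-multiset of \<open>\<Gamma>|\<not>C\<close>; and a non-tautological clause
  that occurs in a formula is implied by unit propagation at once, because its negation turns
  it into the empty clause. For the cost condition, any \<open>\<tau> \<supseteq> \<not>C\<close> absorbs \<open>\<not>C\<close>, so
  \<open>\<tau> \<circ> \<sigma> = \<tau> \<circ> \<pi>\<close>, and as \<open>\<pi>\<close> permutes the blocking variables the cost is unchanged.\<close>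

lemma mem_restrict_ms_iff:
  "D \<in># restrict_ms \<sigma> F \<longleftrightarrow> (\<exists>E\<in>#F. restrict_clause \<sigma> E = Some D)"
  unfolding restrict_ms_def by force

lemma restrict_clause_Some_not_tautology:
  assumes "restrict_clause \<sigma> E = Some D" and "l \<in> D"
  shows "neg_lit l \<notin> D"
  using assms unfolding restrict_clause_def Let_def by (auto split: if_splits)

lemma restrict_clause_neg_clause_self:
  assumes "\<forall>l\<in>D. neg_lit l \<notin> D"
  shows "restrict_clause (neg_clause D) D = Some {}"
proof -
  have "subst_lit (neg_clause D) l = Const False" if "l \<in> D" for l
    using assms that by (cases l) (auto simp: neg_clause_def)
  then have "subst_lit (neg_clause D) ` D \<subseteq> {Const False}" by auto
  then show ?thesis unfolding restrict_clause_def Let_def by auto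
qed

lemma up_implies_mem:
  assumes "D \<in># F" and "\<forall>l\<in>D. neg_lit l \<notin> D"
  shows "up_implies F D"
proof -
  have "{} \<in># restrict_ms (neg_clause D) F"
    using assms restrict_clause_neg_clause_self mem_restrict_ms_iff by metis
  then show ?thesis unfolding up_implies_def by (rule up_refutes.empty)
qed

lemma up_implies_all_restrict_ms:
  assumes "restrict_ms \<sigma> G \<subseteq># F"
  shows "up_implies_all F (restrict_ms \<sigma> G)"
  unfolding up_implies_all_def
proof
  fix D assume D: "D \<in># restrict_ms \<sigma> G"
  then obtain E where "restrict_clause \<sigma> E = Some D"
    using mem_restrict_ms_iff by metis
  then have "\<forall>l\<in>D. neg_lit l \<notin> D"
    using restrict_clause_Some_not_tautology by metis
  moreover have "D \<in># F" using D assms by (rule mset_subset_eqD[rotated])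
  ultimately show "up_implies F D" by (simp add: up_implies_mem)
qed

lemma restrict_ms_add_mset_satisfied:
  "satisfies \<sigma> C \<Longrightarrow> restrict_ms \<sigma> (add_mset C F) = restrict_ms \<sigma> F"
  unfolding restrict_ms_def satisfies_def by simp

lemma restrict_ms_insert_satisfied:
  assumes "finite \<Gamma>" and "satisfies \<sigma> C"
  shows "restrict_ms \<sigma> (mset_set (insert C \<Gamma>)) = restrict_ms \<sigma> (mset_set \<Gamma>)"
proof (cases "C \<in> \<Gamma>")
  case False
  then show ?thesis using assms by (simp add: restrict_ms_add_mset_satisfied)
qed (simp add: insert_absorb)

lemma subst_comp_perm_subst: "subst_comp \<sigma> (perm_subst p) = \<sigma> \<circ> p"
  unfolding subst_comp_def perm_subst_def by auto

lemma subst_comp_comp: "subst_comp \<tau> (\<sigma> \<circ> p) = subst_comp \<tau> \<sigma> \<circ> p"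
  unfolding subst_comp_def by auto

lemma subst_comp_neg_clause_extends:
  assumes "extends \<tau> (neg_clause C)"
  shows "subst_comp \<tau> (neg_clause C) = \<tau>"
proof
  fix x
  show "subst_comp \<tau> (neg_clause C) x = \<tau> x"
    using assms unfolding extends_def subst_comp_def
    by (cases "neg_clause C x") (auto simp: neg_clause_def split: if_splits)
qed

lemma cost_comp_permutation:
  assumes "inj_on p B" and "p ` B = B"
  shows "cost B (\<alpha> \<circ> p) = cost B \<alpha>"
proof -
  have "cost B (\<alpha> \<circ> p) = (\<Sum>b\<in>p ` B. if \<alpha> b = Const True then 1 else 0)"
    unfolding cost_def using assms(1) by (simp add: sum.reindex)
  then show ?thesis using assms(2) unfolding cost_def by simp
qed

theorem lemma6p5:
  fixes B :: "'v set" and \<Gamma> :: "'v clause set" and C :: "'v clause" and p :: "'v \<Rightarrow> 'v"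
  assumes "finite B" and "finite \<Gamma>" and "\<forall>D\<in>\<Gamma>. finite D" and "finite C"
    and "bij p"
    and "p ` B = B"
    and "satisfies (subst_comp (neg_clause C) (perm_subst p)) C"
    and "restrict_ms (subst_comp (neg_clause C) (perm_subst p)) (mset_set \<Gamma>)
           \<subseteq># restrict_ms (neg_clause C) (mset_set \<Gamma>)"
  shows "cost_SR B \<Gamma> C"
proof -
  let ?\<sigma> = "subst_comp (neg_clause C) (perm_subst p)"
  have "restrict_ms ?\<sigma> (mset_set (\<Gamma> \<union> {C})) = restrict_ms ?\<sigma> (mset_set \<Gamma>)"
    using restrict_ms_insert_satisfied[OF assms(2,7)] by simp
  then have implied: "up_implies_all (restrict_ms (neg_clause C) (mset_set \<Gamma>))
                        (restrict_ms ?\<sigma> (mset_set (\<Gamma> \<union> {C})))"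
    using up_implies_all_restrict_ms[OF assms(8)] by simp
  have "cost B (subst_comp \<tau> ?\<sigma>) \<le> cost B \<tau>" if "extends \<tau> (neg_clause C)" for \<tau>
  proof -
    have "subst_comp \<tau> ?\<sigma> = \<tau> \<circ> p"
      using that by (simp add: subst_comp_perm_subst subst_comp_comp subst_comp_neg_clause_extends)
    moreover have "inj_on p B" using assms(5) bij_is_inj inj_on_subset by blast
    ultimately show ?thesis using cost_comp_permutation[OF _ assms(6)] by simp
  qed
  with implied show ?thesis unfolding cost_SR_def by blast
qed

end
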